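(* Let $n\ge4$ and $d$ be integers. If \[ b_{n,d}(1,2)+b_{n,d}(2,1)=2\,p_{n,d}(1,2), \] then \[ b_{n,d}(1,3)+b_{n,d}(3,1)=2\,p_{n,d}(1,3). \]
   Context: For a permutation $\pi=\pi_1\cdots\pi_n$ of $[n]$ (one-line notation), an ascent is a position $t$ with $\pi_t<\pi_{t+1}$ and a descent one with $\pi_t>\pi_{t+1}$; the height of a word is its number of ascents minus its number of descents. $\pi$ is a ballot permutation if every prefix $\pi_1\cdots\pi_t$ has nonnegative height. $b_{n,d}(i,j)$ is the number of ballot permutations of $[n]$ with exactly $d$ descents that contain $i\,n\,j$ as a factor ($\pi_t=i,\pi_{t+1}=n,\pi_{t+2}=j$ for some $t$). A cycle $(c_1\cdots c_k)$ means $c_1\mapsto c_2\mapsto\cdots\mapsto c_k\mapsto c_1$; $\operatorname{cdes}(c)=\lvert\{t\in[k]:c_t>c_{t+1}\}\rvert$, $\operatorname{casc}(c)=\lvert\{t\in[k]:c_t<c_{t+1}\}\rvert$ with $c_{k+1}=c_1$; the cyclic weight of a cycle is $\min(\operatorname{cdes}(c),\operatorname{casc}(c))$ and that of a permutation is the sum over its cycles. An odd order permutation has all cycles of odd length. $p_{n,d}(i,j)$ is the number of odd order permutations $\pi$ of $[n]$ with cyclic weight $d$ such that $\pi(i)=n$ and $\pi(n)=j$ (i.e. containing $i\,n\,j$ as a cyclic factor). *)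

theory Defs
  imports "HOL-Combinatorics.Permutations"
begin

definition is_perm_list :: "nat \<Rightarrow> nat list \<Rightarrow> bool" where
  "is_perm_list n w \<longleftrightarrow> distinct w \<and> set w = {1..n}"

definition asc_count :: "nat list \<Rightarrow> nat" where
  "asc_count w = card {t. Suc t < length w \<and> w ! t < w ! Suc t}"

definition des_count :: "nat list \<Rightarrow> nat" where
  "des_count w = card {t. Suc t < length w \<and> w ! t > w ! Suc t}"

definition height :: "nat list \<Rightarrow> int" where
  "height w = int (asc_count w) - int (des_count w)"

definition ballot :: "nat list \<Rightarrow> bool" where
  "ballot w \<longleftrightarrow> (\<forall>t \<le> length w. height (take t w) \<ge> 0)"

definition has_factor3 :: "nat list \<Rightarrow> nat \<Rightarrow> nat \<Rightarrow> nat \<Rightarrow> bool" where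
  "has_factor3 w a b c \<longleftrightarrow>
     (\<exists>t. t + 2 < length w \<and> w ! t = a \<and> w ! (t + 1) = b \<and> w ! (t + 2) = c)"

definition b_count :: "nat \<Rightarrow> int \<Rightarrow> nat \<Rightarrow> nat \<Rightarrow> nat" where
  "b_count n d i j = card {w. is_perm_list n w \<and> ballot w \<and> int (des_count w) = d
                              \<and> has_factor3 w i n j}"

definition orbit_len :: "(nat \<Rightarrow> nat) \<Rightarrow> nat \<Rightarrow> nat" where
  "orbit_len f x = (LEAST k. 0 < k \<and> (f ^^ k) x = x)"

definition cycle_list :: "(nat \<Rightarrow> nat) \<Rightarrow> nat \<Rightarrow> nat list" where
  "cycle_list f x = map (\<lambda>k. (f ^^ k) x) [0..<orbit_len f x]"

definition cdes :: "nat list \<Rightarrow> nat" where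
  "cdes c = card {t. t < length c \<and> c ! t > c ! ((t + 1) mod length c)}"

definition casc :: "nat list \<Rightarrow> nat" where
  "casc c = card {t. t < length c \<and> c ! t < c ! ((t + 1) mod length c)}"

definition cyc_weight_cycle :: "nat list \<Rightarrow> nat" where
  "cyc_weight_cycle c = min (cdes c) (casc c)"

text \<open>Each cycle is counted once, via its minimal element as representative.\<close>
definition cycle_reps :: "nat \<Rightarrow> (nat \<Rightarrow> nat) \<Rightarrow> nat set" where
  "cycle_reps n f = {x \<in> {1..n}. \<forall>k. x \<le> (f ^^ k) x}"

definition cyclic_weight :: "nat \<Rightarrow> (nat \<Rightarrow> nat) \<Rightarrow> nat" where
  "cyclic_weight n f = (\<Sum>x\<in>cycle_reps n f. cyc_weight_cycle (cycle_list f x))"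

definition odd_order :: "nat \<Rightarrow> (nat \<Rightarrow> nat) \<Rightarrow> bool" where
  "odd_order n f \<longleftrightarrow> (\<forall>x\<in>{1..n}. odd (orbit_len f x))"

definition p_count :: "nat \<Rightarrow> int \<Rightarrow> nat \<Rightarrow> nat \<Rightarrow> nat" where
  "p_count n d i j = card {f. f permutes {1..n} \<and> odd_order n f
                              \<and> int (cyclic_weight n f) = d \<and> f i = n \<and> f n = j}"

end

theory Submission
  imports Defs "HOL-Library.Sublist" "HOL-Combinatorics.Orbits" "HOL-Combinatorics.Cycles"
    "HOL-Combinatorics.Multiset_Permutations"
begin

text \<open>
  Both counts are compared through bijections that exchange the letters 2 and 3.

  Ballot side: in a permutation with factor 1 n 2 or 2 n 1 in which 2 and 3 are not adjacent,
  swapping the values 2 and 3 changes no ascent or descent and yields a factor 1 n 3 or 3 n 1.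
  If 2 and 3 are adjacent, the factor extends to the block 1 n 2 3 or 3 2 n 1, which is replaced
  in place by 2 3 n 1 or 1 n 3 2.  All surrounding letters exceed 3, so ballotness and the number
  of descents depend on the block only through its height, its minimal prefix height and its
  descents, and these agree.  Hence b(1,2) + b(2,1) = b(1,3) + b(3,1).

  Permutation side: if f sends 1 to n to 2 but 2 not to 3, conjugating by the transposition (2 3)
  keeps every cyclic ascent and descent.  Otherwise the cycle of 1 reads (1 n 2 3 y ... x), and it
  has at least five elements because its length is odd; it is replaced by (1 n 3 2 x ... y).
  Apart from four positions, the new cycle traverses the old one backwards, so cyclic ascents and
  descents are exchanged and their minimum, the cyclic weight, is kept.  Hence p(1,2) = p(1,3).
\<close>

lemma card_eq_involution:
  assumes "\<And>x. x \<in> A \<Longrightarrow> h x \<in> B" "\<And>x. x \<in> B \<Longrightarrow> h x \<in> A" "\<And>x. x \<in> A \<union> B \<Longrightarrow> h (h x) = x"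
  shows "card A = card B"
  by (rule bij_betw_same_card[of h], rule bij_betw_byWitness[where f' = h]) (use assms in auto)

lemma transpose_Suc_less_iff:
  "{x, y} \<noteq> {a, Suc a} \<Longrightarrow> transpose a (Suc a) x < transpose a (Suc a) y \<longleftrightarrow> x < y"
  by (auto simp: transpose_def)

section \<open>Heights of words\<close>

definition adj_count :: "('a \<Rightarrow> 'a \<Rightarrow> bool) \<Rightarrow> 'a list \<Rightarrow> nat" where
  "adj_count P w = card {t. Suc t < length w \<and> P (w ! t) (w ! Suc t)}"

lemma adj_count_Nil [simp]: "adj_count P [] = 0"
  by (simp add: adj_count_def)

lemma adj_count_Cons [simp]:
  "adj_count P (x # xs) = (if xs \<noteq> [] \<and> P x (hd xs) then 1 else 0) + adj_count P xs"
proof -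
  define T where "T = {t. Suc t < length xs \<and> P (xs ! t) (xs ! Suc t)}"
  have "{t. Suc t < length (x # xs) \<and> P ((x # xs) ! t) ((x # xs) ! Suc t)} =
      (if xs \<noteq> [] \<and> P x (hd xs) then {0} else {}) \<union> Suc ` T"
    unfolding T_def
  proof (intro set_eqI iffI)
    fix t assume "t \<in> {t. Suc t < length (x # xs) \<and> P ((x # xs) ! t) ((x # xs) ! Suc t)}"
    then show "t \<in> (if xs \<noteq> [] \<and> P x (hd xs) then {0} else {}) \<union>
        Suc ` {t. Suc t < length xs \<and> P (xs ! t) (xs ! Suc t)}"
      by (cases t) (auto simp: hd_conv_nth)
  qed (auto simp: hd_conv_nth split: if_splits)
  moreover have "finite T"
    unfolding T_def by (rule finite_subset[of _ "{..<length xs}"]) auto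
  ultimately show ?thesis
    by (simp add: adj_count_def card_image flip: T_def)
qed

lemma adj_count_append:
  "adj_count P (xs @ ys) =
     adj_count P xs + adj_count P ys + (if xs \<noteq> [] \<and> ys \<noteq> [] \<and> P (last xs) (hd ys) then 1 else 0)"
  by (induction xs) auto

lemma asc_count_eq_adj_count: "asc_count w = adj_count (<) w"
  by (simp add: asc_count_def adj_count_def)

lemma des_count_eq_adj_count: "des_count w = adj_count (\<lambda>x y. y < x) w"
  by (simp add: des_count_def adj_count_def)

lemma height_append:
  "height (xs @ ys) =
     height xs + height ys + (if xs = [] \<or> ys = [] then 0 else sgn (int (hd ys) - int (last xs)))"
  by (auto simp: height_def asc_count_eq_adj_count des_count_eq_adj_count adj_count_append sgn_if)

definition min_prefix_height :: "nat list \<Rightarrow> int" where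
  "min_prefix_height B = Min ((\<lambda>k. height (take k B)) ` {1..length B})"

lemma all_prefixes_append_iff:
  "(\<forall>k\<le>length (xs @ ys). P (take k (xs @ ys))) \<longleftrightarrow>
     (\<forall>k\<le>length xs. P (take k xs)) \<and> (\<forall>k\<le>length ys. P (xs @ take k ys))"
proof safe
  fix k assume "\<forall>k\<le>length (xs @ ys). P (take k (xs @ ys))" "k \<le> length ys"
  then show "P (xs @ take k ys)"
    by (metis add_le_cancel_left add_diff_cancel_left' le_add1 length_append take_append take_all)
next
  fix k assume "\<forall>k\<le>length (xs @ ys). P (take k (xs @ ys))" "k \<le> length xs"
  then show "P (take k xs)"
    by (metis le_add1 le_trans length_append take_append diff_is_0_eq append_Nil2 take_eq_Nil)
next
  fix k assume "\<forall>k\<le>length xs. P (take k xs)" "\<forall>k\<le>length ys. P (xs @ take k ys)"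
    and "k \<le> length (xs @ ys)"
  then show "P (take k (xs @ ys))"
    by (cases "k \<le> length xs") auto
qed

lemma ballot_append_iff:
  "ballot (xs @ ys) \<longleftrightarrow> ballot xs \<and> (\<forall>k\<le>length ys. 0 \<le> height (xs @ take k ys))"
  unfolding ballot_def by (rule all_prefixes_append_iff)

lemma all_le_split_zero: "(\<forall>k\<le>m. P k) \<longleftrightarrow> P 0 \<and> (\<forall>k\<in>{1..m}. P k)" for P :: "nat \<Rightarrow> bool"
  by (auto simp: Suc_le_eq)

lemma ballot_block_iff:
  assumes "B \<noteq> []" and u: "\<forall>y\<in>set u. hd B < y" and v: "\<forall>y\<in>set v. last B < y"
  defines "c \<equiv> height u - of_bool (u \<noteq> [])"
  shows "ballot (u @ B @ v) \<longleftrightarrow> ballot u \<and> 0 \<le> c + min_prefix_height B \<and>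
    (\<forall>k\<le>length v. 0 \<le> c + height B + height (take k v) + of_bool (take k v \<noteq> []))"
proof -
  have uB: "height (u @ take k B) = c + height (take k B)" if "k \<in> {1..length B}" for k
    using that \<open>B \<noteq> []\<close> u by (auto simp: height_append c_def)
  have uBv: "height (u @ B @ take k v) = c + height B + height (take k v) + of_bool (take k v \<noteq> [])"
    for k
    using \<open>B \<noteq> []\<close> u v by (auto simp: height_append c_def dest: in_set_takeD)
  have fin: "finite ((\<lambda>k. height (take k B)) ` {1..length B})"
    and ne: "(\<lambda>k. height (take k B)) ` {1..length B} \<noteq> {}"
    using \<open>B \<noteq> []\<close> by (simp_all add: Suc_le_eq)
  have "(\<forall>k\<le>length B. 0 \<le> height (u @ take k B)) \<longleftrightarrow>
      0 \<le> height u \<and> (\<forall>k\<in>{1..length B}. - c \<le> height (take k B))"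
    unfolding all_le_split_zero[of "length B"] using uB by auto
  also have "\<dots> \<longleftrightarrow> 0 \<le> height u \<and> - c \<le> min_prefix_height B"
    unfolding min_prefix_height_def Min_ge_iff[OF fin ne] by simp
  also have "\<dots> \<longleftrightarrow> 0 \<le> height u \<and> 0 \<le> c + min_prefix_height B"
    by linarith
  finally have B: "(\<forall>k\<le>length B. 0 \<le> height (u @ take k B)) \<longleftrightarrow>
      0 \<le> height u \<and> 0 \<le> c + min_prefix_height B" .
  have "ballot u \<Longrightarrow> 0 \<le> height u"
    unfolding ballot_def by (metis order_refl take_all)
  then show ?thesis
    unfolding ballot_append_iff[of u "B @ v"] B
      all_prefixes_append_iff[where P = "\<lambda>w. 0 \<le> height (u @ w)"]
    by (auto simp: uBv)
qed

lemma des_count_block: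
  assumes "B \<noteq> []" and u: "\<forall>y\<in>set u. hd B < y" and v: "\<forall>y\<in>set v. last B < y"
  shows "des_count (u @ B @ v) = des_count u + des_count B + des_count v + of_bool (u \<noteq> [])"
proof -
  have "u \<noteq> [] \<Longrightarrow> hd B < last u" "v \<noteq> [] \<Longrightarrow> \<not> hd v < last B"
    using u v by (simp_all add: not_less_iff_gr_or_eq)
  then show ?thesis
    using assms(1) by (cases "u = []"; cases "v = []")
      (simp_all add: des_count_eq_adj_count adj_count_append)
qed

section \<open>Factors of words\<close>

lemma sublist_iff_nth:
  "sublist xs w \<longleftrightarrow> (\<exists>t. t + length xs \<le> length w \<and> (\<forall>i<length xs. w ! (t + i) = xs ! i))"
proof
  assume "sublist xs w"
  then obtain p s where "w = p @ xs @ s" by (auto simp: sublist_def)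
  then show "\<exists>t. t + length xs \<le> length w \<and> (\<forall>i<length xs. w ! (t + i) = xs ! i)"
    by (intro exI[of _ "length p"]) (simp add: nth_append)
next
  assume "\<exists>t. t + length xs \<le> length w \<and> (\<forall>i<length xs. w ! (t + i) = xs ! i)"
  then obtain t where t: "t + length xs \<le> length w" "\<forall>i<length xs. w ! (t + i) = xs ! i" by blast
  then have "take (length xs) (drop t w) = xs"
    by (intro nth_equalityI) auto
  then have "w = take t w @ xs @ drop (length xs) (drop t w)"
    by (metis append_take_drop_id)
  then show "sublist xs w" by (metis sublist_appendI)
qed

lemma has_factor3_iff_sublist: "has_factor3 w a b c \<longleftrightarrow> sublist [a, b, c] w"
proof
  assume "has_factor3 w a b c"
  then obtain t where "t + 2 < length w" "w ! t = a" "w ! (t + 1) = b" "w ! (t + 2) = c"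
    unfolding has_factor3_def by blast
  then show "sublist [a, b, c] w"
    unfolding sublist_iff_nth by (intro exI[of _ t]) (auto simp: less_Suc_eq numeral_3_eq_3)
next
  assume "sublist [a, b, c] w"
  then obtain p s where "w = p @ [a, b, c] @ s"
    by (auto simp: sublist_def)
  then show "has_factor3 w a b c"
    unfolding has_factor3_def by (intro exI[of _ "length p"]) (simp add: nth_append)
qed

lemma sublist_nth_Suc: "Suc t < length w \<Longrightarrow> sublist [w ! t, w ! Suc t] w"
  unfolding sublist_iff_nth by (intro exI[of _ t]) (auto simp: less_Suc_eq)

lemma sublist_map_involution:
  assumes "\<And>x. h (h x) = x"
  shows "sublist xs (map h w) \<longleftrightarrow> sublist (map h xs) w"
proof -
  have hh: "map h (map h ys) = ys" for ys
    by (induction ys) (simp_all add: assms)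
  show ?thesis
    by (metis hh map_mono_sublist)
qed

lemma distinct_sublist_same_pred:
  assumes "distinct w" "sublist [x, a] w" "sublist [y, a] w"
  shows "x = y"
proof -
  obtain p q where "w = p @ [x, a] @ q"
    using assms(2) by (auto simp: sublist_def)
  then have p: "w = (p @ [x]) @ a # q" by simp
  obtain p' q' where "w = p' @ [y, a] @ q'"
    using assms(3) by (auto simp: sublist_def)
  then have eq: "(p @ [x]) @ a # q = (p' @ [y]) @ a # q'"
    using p by simp
  have notin: "a \<notin> set (p @ [x])" "a \<notin> set q"
    using assms(1) p by auto
  have "p @ [x] = p' @ [y]"
    using eq unfolding append_Cons_eq_iff[OF notin] by (rule conjunct1)
  then show ?thesis by simp
qed

lemma distinct_sublist_glue:
  assumes "distinct w" "sublist (xs @ [a]) w" "sublist (a # ys) w"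
  shows "sublist (xs @ a # ys) w"
proof -
  obtain p q where "w = p @ (xs @ [a]) @ q"
    using assms(2) by (auto simp: sublist_def)
  then have p: "w = (p @ xs) @ a # q" by simp
  obtain p' q' where "w = p' @ (a # ys) @ q'"
    using assms(3) by (auto simp: sublist_def)
  then have eq: "(p @ xs) @ a # q = p' @ a # (ys @ q')"
    using p by simp
  have notin: "a \<notin> set (p @ xs)" "a \<notin> set q"
    using assms(1) p by auto
  have "q = ys @ q'"
    using eq unfolding append_Cons_eq_iff[OF notin] by (rule conjunct2)
  then have "w = p @ (xs @ a # ys) @ q'"
    using p by simp
  then show ?thesis
    by (metis sublist_appendI)
qed

lemma distinct_sublist_adjacent_after:
  assumes "distinct w" "c \<noteq> b"
  shows "sublist (xs @ [c, a]) w \<and> (sublist [a, b] w \<or> sublist [b, a] w) \<longleftrightarrow>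
    sublist (xs @ [c, a, b]) w"
proof
  assume *: "sublist (xs @ [c, a]) w \<and> (sublist [a, b] w \<or> sublist [b, a] w)"
  then have "sublist [c, a] w"
    by (metis sublist_append_leftI sublist_order.order.trans)
  with * have "sublist [a, b] w"
    using distinct_sublist_same_pred[OF assms(1)] assms(2) by blast
  then show "sublist (xs @ [c, a, b]) w"
    using distinct_sublist_glue[OF assms(1), of "xs @ [c]" a "[b]"] * by simp
next
  have "sublist (xs @ [c, a]) (xs @ [c, a, b])" "sublist [a, b] (xs @ [c, a, b])"
    using sublist_append_rightI[of "xs @ [c, a]" "[b]"] sublist_append_leftI[of "[a, b]" "xs @ [c]"]
    by simp_all
  moreover assume "sublist (xs @ [c, a, b]) w"
  ultimately show "sublist (xs @ [c, a]) w \<and> (sublist [a, b] w \<or> sublist [b, a] w)"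
    using sublist_order.order.trans by blast
qed

lemma distinct_sublist_adjacent_before:
  assumes "distinct w" "c \<noteq> b"
  shows "sublist (a # c # ys) w \<and> (sublist [a, b] w \<or> sublist [b, a] w) \<longleftrightarrow>
    sublist (b # a # c # ys) w"
  using distinct_sublist_adjacent_after[of "rev w" c b "rev ys" a] assms
  by (auto simp: sublist_rev_right)

section \<open>Ballot permutations\<close>

lemma asc_des_count_map_transpose:
  assumes "\<not> sublist [a, Suc a] w" "\<not> sublist [Suc a, a] w"
  shows "asc_count (map (transpose a (Suc a)) w) = asc_count w"
    and "des_count (map (transpose a (Suc a)) w) = des_count w"
proof -
  have "{w ! t, w ! Suc t} \<noteq> {a, Suc a}" "{w ! Suc t, w ! t} \<noteq> {a, Suc a}"
    if "Suc t < length w" for t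
    using sublist_nth_Suc[OF that] assms by (auto simp: doubleton_eq_iff)
  then have "transpose a (Suc a) (w ! t) < transpose a (Suc a) (w ! Suc t) \<longleftrightarrow> w ! t < w ! Suc t"
    and "transpose a (Suc a) (w ! Suc t) < transpose a (Suc a) (w ! t) \<longleftrightarrow> w ! Suc t < w ! t"
    if "Suc t < length w" for t
    using that by (simp_all add: transpose_Suc_less_iff)
  then show "asc_count (map (transpose a (Suc a)) w) = asc_count w"
    and "des_count (map (transpose a (Suc a)) w) = des_count w"
    unfolding asc_count_def des_count_def by (auto intro!: arg_cong[where f = card])
qed

lemma ballot_map_transpose:
  assumes "\<not> sublist [a, Suc a] w" "\<not> sublist [Suc a, a] w"
  shows "ballot (map (transpose a (Suc a)) w) \<longleftrightarrow> ballot w"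
proof -
  have "\<not> sublist [a, Suc a] (take t w)" "\<not> sublist [Suc a, a] (take t w)" for t
    using assms sublist_order.order.trans[OF _ sublist_take] by blast+
  then have "height (map (transpose a (Suc a)) (take t w)) = height (take t w)" for t
    by (simp add: height_def asc_des_count_map_transpose)
  then show ?thesis
    by (simp add: ballot_def take_map)
qed

definition ballot_perm :: "nat \<Rightarrow> int \<Rightarrow> nat list \<Rightarrow> bool" where
  "ballot_perm n d w \<longleftrightarrow> is_perm_list n w \<and> ballot w \<and> int (des_count w) = d"

lemma finite_ballot_perm: "finite {w. ballot_perm n d w}"
  by (rule finite_subset[OF _ finite_permutations_of_set[of "{1..n}"]])
    (auto simp: ballot_perm_def is_perm_list_def permutations_of_set_def)

lemma b_count_eq_card_sublist: "b_count n d i j = card {w. ballot_perm n d w \<and> sublist [i, n, j] w}"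
  by (simp add: b_count_def ballot_perm_def has_factor3_iff_sublist)

lemma ballot_perm_exchange_block:
  assumes "set B1 = set B2" "distinct B1" "distinct B2" "{1, 2, 3} \<subseteq> set B1"
    and "hd B1 \<le> 3" "hd B2 \<le> 3" "last B1 \<le> 3" "last B2 \<le> 3"
    and "height B1 = height B2" "min_prefix_height B1 = min_prefix_height B2"
    and "des_count B1 = des_count B2"
  shows "ballot_perm n d (u @ B1 @ v) \<longleftrightarrow> ballot_perm n d (u @ B2 @ v)"
proof (cases "is_perm_list n (u @ B1 @ v)")
  case True
  have big: "3 < y" if "y \<in> set u \<union> set v" for y
  proof -
    have "y \<notin> set B1" "y \<in> {1..n}"
      using True that by (auto simp: is_perm_list_def)
    then have "y \<noteq> 1" "y \<noteq> 2" "y \<noteq> 3" "1 \<le> y"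
      using assms(4) by auto
    then show ?thesis
      by linarith
  qed
  have ne: "B1 \<noteq> []" "B2 \<noteq> []"
    using assms(1,4) by auto
  have u: "\<forall>y\<in>set u. hd B < y" and v: "\<forall>y\<in>set v. last B < y"
    if "hd B \<le> 3" "last B \<le> 3" for B
    using that big by fastforce+
  have "ballot (u @ B1 @ v) \<longleftrightarrow> ballot (u @ B2 @ v)"
    unfolding ballot_block_iff[OF ne(1) u v, OF assms(5,7) assms(5,7)]
      ballot_block_iff[OF ne(2) u v, OF assms(6,8) assms(6,8)] assms(9,10) ..
  moreover have "des_count (u @ B1 @ v) = des_count (u @ B2 @ v)"
    using des_count_block[OF ne(1) u v, OF assms(5,7) assms(5,7)]
      des_count_block[OF ne(2) u v, OF assms(6,8) assms(6,8)] assms(11) by simp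
  moreover have "is_perm_list n (u @ B2 @ v)"
    using True assms(1-3) by (auto simp: is_perm_list_def)
  ultimately show ?thesis
    using True by (simp add: ballot_perm_def)
next
  case False
  then have "\<not> is_perm_list n (u @ B2 @ v)"
    using assms(1-3) by (auto simp: is_perm_list_def)
  with False show ?thesis
    by (simp add: ballot_perm_def)
qed

lemma card_sublist_exchange:
  assumes "\<And>u v. Q (u @ B1 @ v) \<longleftrightarrow> Q (u @ B2 @ v)" "\<And>w. Q w \<Longrightarrow> distinct w"
    and "B1 \<noteq> []" "B2 \<noteq> []"
  shows "card {w. Q w \<and> sublist B1 w} = card {w. Q w \<and> sublist B2 w}"
proof -
  have image: "{w. Q w \<and> sublist B w} = (\<lambda>(u, v). u @ B @ v) ` {(u, v). Q (u @ B @ v)}" for B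
    by (auto simp: sublist_def)
  have inj: "inj_on (\<lambda>(u, v). u @ B @ v) {(u, v). Q (u @ B @ v)}" if "B \<noteq> []" for B
  proof (rule inj_onI, clarify)
    fix u v u' v' assume "Q (u @ B @ v)" and eq: "u @ B @ v = u' @ B @ v'"
    obtain b B' where B: "B = b # B'" using \<open>B \<noteq> []\<close> by (cases B) auto
    have "b \<notin> set u" "b \<notin> set (B' @ v)"
      using assms(2)[OF \<open>Q (u @ B @ v)\<close>] B by auto
    moreover have "u @ b # (B' @ v) = u' @ b # (B' @ v')"
      using eq B by simp
    ultimately show "u = u' \<and> v = v'"
      using append_Cons_eq_iff by fastforce
  qed
  have "card {w. Q w \<and> sublist B1 w} = card {(u, v). Q (u @ B1 @ v)}"
    unfolding image by (rule card_image[OF inj[OF assms(3)]])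
  also have "{(u, v). Q (u @ B1 @ v)} = {(u, v). Q (u @ B2 @ v)}"
    using assms(1) by auto
  also have "card \<dots> = card {w. Q w \<and> sublist B2 w}"
    unfolding image by (rule card_image[OF inj[OF assms(4)], symmetric])
  finally show ?thesis .
qed

definition adjacent_2_3 :: "nat list \<Rightarrow> bool" where
  "adjacent_2_3 w \<longleftrightarrow> sublist [2, 3] w \<or> sublist [3, 2] w"

lemma card_not_adjacent_transpose:
  assumes "n \<ge> 4"
  shows "card {w. ballot_perm n d w \<and> sublist xs w \<and> \<not> adjacent_2_3 w} =
    card {w. ballot_perm n d w \<and> sublist (map (transpose 2 3) xs) w \<and> \<not> adjacent_2_3 w}"
proof -
  let ?\<tau> = "transpose (2::nat) 3"
  have invol: "map ?\<tau> (map ?\<tau> w) = w" for w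
    by (simp add: comp_def)
  have "?\<tau> permutes {1..n}"
    using assms by (intro permutes_swap_id) auto
  then have "?\<tau> ` set w = {1..n} \<longleftrightarrow> set w = {1..n}" for w
    by (metis permutes_image permutes_inj inj_image_eq_iff)
  then have perm: "is_perm_list n (map ?\<tau> w) \<longleftrightarrow> is_perm_list n w" for w
    by (simp add: is_perm_list_def distinct_map)
  have "ballot_perm n d (map ?\<tau> w) \<longleftrightarrow> ballot_perm n d w" if "\<not> adjacent_2_3 w" for w
    using ballot_map_transpose[of 2 w] asc_des_count_map_transpose[of 2 w] that perm
    by (simp add: ballot_perm_def adjacent_2_3_def)
  moreover have "sublist (map ?\<tau> xs) (map ?\<tau> w) \<longleftrightarrow> sublist xs w"
    and "adjacent_2_3 (map ?\<tau> w) \<longleftrightarrow> adjacent_2_3 w" for w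
    by (auto simp: adjacent_2_3_def sublist_map_involution[of ?\<tau>] invol)
  ultimately have "ballot_perm n d (map ?\<tau> w) \<and> sublist (map ?\<tau> xs) (map ?\<tau> w) \<and>
      \<not> adjacent_2_3 (map ?\<tau> w) \<longleftrightarrow> ballot_perm n d w \<and> sublist xs w \<and> \<not> adjacent_2_3 w" for w
    by auto
  from this[of "map ?\<tau> w" for w] show ?thesis
    by (intro card_eq_involution[where h = "map ?\<tau>"]) (auto simp: invol)
qed

lemma b_count_split:
  assumes "n \<ge> 4" "{a, b} = {2, 3::nat}"
  shows "b_count n d 1 a = card {w. ballot_perm n d w \<and> sublist [1, n, a] w \<and> \<not> adjacent_2_3 w}
      + card {w. ballot_perm n d w \<and> sublist [1, n, a, b] w}"
    and "b_count n d a 1 = card {w. ballot_perm n d w \<and> sublist [a, n, 1] w \<and> \<not> adjacent_2_3 w}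
      + card {w. ballot_perm n d w \<and> sublist [b, a, n, 1] w}"
proof -
  have split: "card {w. P w} = card {w. P w \<and> \<not> R w} + card {w. P w \<and> R w}"
    if "finite {w. P w}" for P R :: "nat list \<Rightarrow> bool"
    using that by (subst card_Un_disjoint[symmetric]) (auto intro: arg_cong[where f = card])
  have adjacent: "adjacent_2_3 w \<longleftrightarrow> sublist [a, b] w \<or> sublist [b, a] w" for w
    using assms(2) by (auto simp: adjacent_2_3_def doubleton_eq_iff)
  have "distinct w" if "ballot_perm n d w" for w
    using that by (simp add: ballot_perm_def is_perm_list_def)
  moreover have "n \<noteq> b"
    using assms by (auto simp: doubleton_eq_iff)
  \<comment> \<open>\<open>a\<close> is preceded (resp. followed) by \<open>n \<noteq> b\<close>, so 2 and 3 can only be adjacent as \<open>a b\<close>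
      (resp. \<open>b a\<close>).\<close>
  ultimately have "ballot_perm n d w \<and> sublist [1, n, a] w \<and> adjacent_2_3 w \<longleftrightarrow>
      ballot_perm n d w \<and> sublist [1, n, a, b] w"
    and "ballot_perm n d w \<and> sublist [a, n, 1] w \<and> adjacent_2_3 w \<longleftrightarrow>
      ballot_perm n d w \<and> sublist [b, a, n, 1] w" for w
    using distinct_sublist_adjacent_after[of w n b "[1]" a]
      distinct_sublist_adjacent_before[of w n b a "[1]"]
    unfolding adjacent by auto
  then show "b_count n d 1 a = card {w. ballot_perm n d w \<and> sublist [1, n, a] w \<and> \<not> adjacent_2_3 w}
      + card {w. ballot_perm n d w \<and> sublist [1, n, a, b] w}"
    and "b_count n d a 1 = card {w. ballot_perm n d w \<and> sublist [a, n, 1] w \<and> \<not> adjacent_2_3 w}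
      + card {w. ballot_perm n d w \<and> sublist [b, a, n, 1] w}"
    unfolding b_count_eq_card_sublist
    by (subst split[where R = adjacent_2_3], auto intro: finite_subset[OF _ finite_ballot_perm])+
qed

lemma b_count_sum_2_eq_3:
  assumes "n \<ge> 4"
  shows "b_count n d 1 2 + b_count n d 2 1 = b_count n d 1 3 + b_count n d 3 1"
proof -
  have exchange_1n23:
      "ballot_perm n d (u @ [1, n, 2, 3] @ v) \<longleftrightarrow> ballot_perm n d (u @ [2, 3, n, 1] @ v)"
    and exchange_32n1:
      "ballot_perm n d (u @ [3, 2, n, 1] @ v) \<longleftrightarrow> ballot_perm n d (u @ [1, n, 3, 2] @ v)"
    for u v
    by (intro ballot_perm_exchange_block; use assms in \<open>auto simp: height_def min_prefix_height_def
        asc_count_eq_adj_count des_count_eq_adj_count numeral_eq_Suc atLeastAtMostSuc_conv\<close>)+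
  have "distinct w" if "ballot_perm n d w" for w
    using that by (simp add: ballot_perm_def is_perm_list_def)
  then have "card {w. ballot_perm n d w \<and> sublist [1, n, 2, 3] w} =
      card {w. ballot_perm n d w \<and> sublist [2, 3, n, 1] w}"
    and "card {w. ballot_perm n d w \<and> sublist [3, 2, n, 1] w} =
      card {w. ballot_perm n d w \<and> sublist [1, n, 3, 2] w}"
    using card_sublist_exchange[OF exchange_1n23] card_sublist_exchange[OF exchange_32n1]
    by simp_all
  moreover have "map (transpose 2 3) [1, n, 2] = [1, n, 3]"
    and "map (transpose 2 3) [2, n, 1] = [3, n, 1]"
    using assms by auto
  ultimately show ?thesis
    using b_count_split[OF assms, of 2 3 d] b_count_split[OF assms, of 3 2 d]
      card_not_adjacent_transpose[OF assms, of d "[1, n, 2]"]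
      card_not_adjacent_transpose[OF assms, of d "[2, n, 1]"]
    by (simp add: insert_commute)
qed

section \<open>Orbits and cyclic weight\<close>

lemma orbit_eq_of_mem: "permutation f \<Longrightarrow> y \<in> orbit f x \<Longrightarrow> orbit f y = orbit f x"
  by (metis cyclic_on_orbit' orbit_cyclic_eq3)

lemma f_mem_orbit_iff: "permutation f \<Longrightarrow> f v \<in> orbit f x \<longleftrightarrow> v \<in> orbit f x"
  by (metis orbit.step orbit_eq_of_mem permutation_orbit_step permutation_self_in_orbit)

lemma inv_mem_orbit_iff: "permutation f \<Longrightarrow> inv f v \<in> orbit f x \<longleftrightarrow> v \<in> orbit f x"
  using f_mem_orbit_iff[of f "inv f v"]
  by (simp add: bij_is_surj permutation_bijective surj_f_inv_f)

lemma image_orbit: "permutation f \<Longrightarrow> f ` orbit f x = orbit f x"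
  using f_mem_orbit_iff[of f] inv_mem_orbit_iff[of f]
  by (auto simp: image_iff) (metis bij_is_surj permutation_bijective surj_f_inv_f)

lemma funpow_mem_orbit: "permutation f \<Longrightarrow> (f ^^ k) x \<in> orbit f x"
  by (simp add: funpow_in_orbit permutation_self_in_orbit)

lemma set_support: "permutation f \<Longrightarrow> set (support f x) = orbit f x"
  unfolding support_set orbit_altdef_permutation by blast

lemma card_orbit_eq_least_power: "permutation f \<Longrightarrow> card (orbit f x) = least_power f x"
  using distinct_card[OF cycle_of_permutation] by (simp add: set_support[symmetric])

lemma funpow_orbit_eq_iff:
  "permutation f \<Longrightarrow> i < card (orbit f x) \<Longrightarrow> j < card (orbit f x) \<Longrightarrow> (f ^^ i) x = (f ^^ j) x \<longleftrightarrow> i = j"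
  using cycle_of_permutation[of f x] card_orbit_eq_least_power[of f x]
  by (auto simp: distinct_conv_nth)

lemma inv_eq_funpow_card:
  assumes "permutation f"
  shows "inv f x = (f ^^ (card (orbit f x) - 1)) x"
proof -
  have "f ((f ^^ (card (orbit f x) - 1)) x) = (f ^^ card (orbit f x)) x"
    using least_power_of_permutation(2)[OF assms, of x] card_orbit_eq_least_power[OF assms, of x]
    by (metis Suc_diff_1 funpow.simps(2) comp_apply)
  also have "\<dots> = x"
    using least_power_of_permutation(1)[OF assms, of x] card_orbit_eq_least_power[OF assms, of x]
    by simp
  finally show ?thesis
    by (metis assms bij_inv_eq_iff permutation_bijective)
qed

lemma five_le_card_orbit:
  assumes "permutation f" "distinct [x, f x, f (f x), f (f (f x))]" "odd (card (orbit f x))"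
  shows "5 \<le> card (orbit f x)"
proof -
  have "{x, f x, f (f x), f (f (f x))} \<subseteq> orbit f x"
    by (simp add: assms(1) f_mem_orbit_iff permutation_self_in_orbit)
  moreover have "card {x, f x, f (f x), f (f (f x))} = 4"
    using assms(2) by simp
  ultimately have "4 \<le> card (orbit f x)"
    by (metis card_mono finite_orbit permutation_self_in_orbit[OF assms(1)])
  then show ?thesis
    using assms(3) by (cases "card (orbit f x) = 4") auto
qed

lemma orbit_len_eq_least_power: "orbit_len f x = least_power f x"
  by (simp add: orbit_len_def least_power_def conj_commute)

lemma cycle_list_eq_support: "cycle_list f x = support f x"
  by (simp add: cycle_list_def orbit_len_eq_least_power)

lemma odd_order_iff_card_orbit:
  "permutation f \<Longrightarrow> odd_order n f \<longleftrightarrow> (\<forall>x\<in>{1..n}. odd (card (orbit f x)))"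
  by (simp add: odd_order_def card_orbit_eq_least_power orbit_len_eq_least_power)

lemma card_cyclic_pairs:
  assumes "distinct c" "\<And>t. t < length c \<Longrightarrow> c ! ((t + 1) mod length c) = f (c ! t)"
  shows "card {t. t < length c \<and> P (c ! t) (c ! ((t + 1) mod length c))} =
    card {y \<in> set c. P y (f y)}"
proof -
  have "{y \<in> set c. P y (f y)} = (\<lambda>t. c ! t) ` {t. t < length c \<and> P (c ! t) (f (c ! t))}"
    by (auto simp: in_set_conv_nth)
  moreover have "inj_on (\<lambda>t. c ! t) {t. t < length c \<and> P (c ! t) (f (c ! t))}"
    using assms(1) by (auto simp: inj_on_def nth_eq_iff_index_eq)
  ultimately show ?thesis
    using assms(2) by (simp add: card_image cong: conj_cong)
qed

definition orbit_weight :: "(nat \<Rightarrow> nat) \<Rightarrow> nat set \<Rightarrow> nat" where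
  "orbit_weight f Q = min (card {y \<in> Q. f y < y}) (card {y \<in> Q. y < f y})"

lemma cyc_weight_cycle_list:
  assumes "permutation f"
  shows "cyc_weight_cycle (cycle_list f x) = orbit_weight f (orbit f x)"
proof -
  let ?c = "cycle_list f x"
  have "?c ! ((t + 1) mod length ?c) = f (?c ! t)" if "t < length ?c" for t
    using that least_power_of_permutation[OF assms, of x]
    by (simp add: cycle_list_eq_support funpow_mod_eq)
  note pairs = card_cyclic_pairs[OF _ this, unfolded cycle_list_eq_support set_support[OF assms]]
  show ?thesis
    using pairs[of "\<lambda>u v. v < u"] pairs[of "(<)"] cycle_of_permutation[OF assms]
    by (simp add: cyc_weight_cycle_def cdes_def casc_def orbit_weight_def cycle_list_eq_support)
qed

lemma cyclic_weight_eq_sum_orbits: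
  assumes "f permutes {1..n}"
  shows "cyclic_weight n f = (\<Sum>Q\<in>orbit f ` {1..n}. orbit_weight f Q)"
proof -
  have perm: "permutation f"
    using assms permutation_permutes by blast
  have reps: "cycle_reps n f = {x \<in> {1..n}. \<forall>y\<in>orbit f x. x \<le> y}"
    by (auto simp: cycle_reps_def orbit_altdef_permutation[OF perm])
  have "inj_on (orbit f) (cycle_reps n f)"
  proof (rule inj_onI)
    fix x y assume "x \<in> cycle_reps n f" "y \<in> cycle_reps n f" "orbit f x = orbit f y"
    moreover have "x \<in> orbit f x" "y \<in> orbit f y"
      using permutation_self_in_orbit[OF perm] by auto
    ultimately show "x = y"
      unfolding reps by (metis (no_types, lifting) mem_Collect_eq order_antisym)
  qed
  moreover have "orbit f ` cycle_reps n f = orbit f ` {1..n}"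
  proof
    show "orbit f ` {1..n} \<subseteq> orbit f ` cycle_reps n f"
    proof
      fix Q assume "Q \<in> orbit f ` {1..n}"
      then obtain x where x: "x \<in> {1..n}" "Q = orbit f x" by blast
      have fin: "finite Q" and ne: "Q \<noteq> {}"
        using finite_orbit[OF permutation_self_in_orbit[OF perm]] orbit_nonempty x(2) by simp_all
      define m where "m = Min Q"
      have "m \<in> Q" "\<forall>y\<in>Q. m \<le> y"
        using Min_in[OF fin ne] Min_le[OF fin] by (simp_all add: m_def)
      moreover have "orbit f m = Q"
        using orbit_eq_of_mem[OF perm] \<open>m \<in> Q\<close> x(2) by simp
      moreover have "m \<in> {1..n}"
        using permutes_orbit_subset[OF assms x(1)] \<open>m \<in> Q\<close> x(2) by blast
      ultimately have "m \<in> cycle_reps n f" "Q = orbit f m"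
        unfolding reps by simp_all
      then show "Q \<in> orbit f ` cycle_reps n f" by blast
    qed
  qed (auto simp: reps)
  ultimately show ?thesis
    unfolding cyclic_weight_def cyc_weight_cycle_list[OF perm] by (metis sum.reindex_cong)
qed

lemma orbit_weight_cong:
  "(\<And>y. y \<in> Q \<Longrightarrow> (g y < y \<longleftrightarrow> h y < y) \<and> (y < g y \<longleftrightarrow> y < h y)) \<Longrightarrow> orbit_weight g Q = orbit_weight h Q"
  unfolding orbit_weight_def by (metis (mono_tags, lifting) Collect_cong)

lemma orbit_weight_inv:
  assumes "bij f" "f ` Q = Q"
  shows "orbit_weight (inv f) Q = orbit_weight f Q"
proof -
  have inj: "inj f"
    using assms(1) bij_is_inj by blast
  have "f ` {z \<in> Q. R (f z)} = {y \<in> f ` Q. R y}" for R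
    by auto
  then have "{y \<in> Q. R y} = f ` {z \<in> Q. R (f z)}" for R
    by (simp add: assms(2))
  from this[of "\<lambda>y. inv f y < y"] this[of "\<lambda>y. y < inv f y"]
  have "{y \<in> Q. inv f y < y} = f ` {z \<in> Q. z < f z}" "{y \<in> Q. y < inv f y} = f ` {z \<in> Q. f z < z}"
    by (simp_all add: inv_f_f[OF inj])
  then show ?thesis
    by (simp add: orbit_weight_def card_image inj_on_subset[OF inj] min.commute)
qed

lemma funpow_conjugate: "bij \<sigma> \<Longrightarrow> (\<sigma> \<circ> f \<circ> inv \<sigma>) ^^ k = \<sigma> \<circ> (f ^^ k) \<circ> inv \<sigma>"
  by (induction k) (auto simp: bij_is_inj bij_is_surj surj_f_inv_f inv_f_f fun_eq_iff)

lemma orbit_conjugate: "bij \<sigma> \<Longrightarrow> orbit (\<sigma> \<circ> f \<circ> inv \<sigma>) (\<sigma> y) = \<sigma> ` orbit f y"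
  by (auto simp: orbit_altdef funpow_conjugate bij_is_inj inv_f_f)

lemma conjugate_invariants:
  assumes f: "f permutes {1..n}" and \<sigma>: "\<sigma> permutes {1..n}"
    and order: "\<And>y. \<sigma> (f y) < \<sigma> y \<longleftrightarrow> f y < y" "\<And>y. \<sigma> y < \<sigma> (f y) \<longleftrightarrow> y < f y"
  defines "g \<equiv> \<sigma> \<circ> f \<circ> inv \<sigma>"
  shows "g permutes {1..n}" "cyclic_weight n g = cyclic_weight n f" "odd_order n g \<longleftrightarrow> odd_order n f"
proof -
  show g: "g permutes {1..n}"
    unfolding g_def by (intro permutes_compose permutes_inv f \<sigma>)
  have bij: "bij \<sigma>" and inj: "inj \<sigma>" and image: "\<sigma> ` {1..n} = {1..n}"
    using \<sigma> permutes_bij bij_is_inj permutes_image by blast+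
  have orbit: "orbit g (\<sigma> y) = \<sigma> ` orbit f y" for y
    unfolding g_def by (rule orbit_conjugate[OF bij])
  have orbits: "orbit g ` {1..n} = image \<sigma> ` orbit f ` {1..n}"
    by (metis (no_types, lifting) image ext image_image orbit)
  have weight: "orbit_weight g (\<sigma> ` Q) = orbit_weight f Q" for Q
  proof -
    have "{z \<in> \<sigma> ` Q. g z < z} = \<sigma> ` {y \<in> Q. f y < y}" "{z \<in> \<sigma> ` Q. z < g z} = \<sigma> ` {y \<in> Q. y < f y}"
      using order by (auto simp: g_def inv_f_f[OF inj])
    then show ?thesis
      by (simp add: orbit_weight_def card_image inj_on_subset[OF inj])
  qed
  have "inj_on (image \<sigma>) (orbit f ` {1..n})"
    by (meson inj inj_image_eq_iff inj_onI)
  then show "cyclic_weight n g = cyclic_weight n f"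
    unfolding cyclic_weight_eq_sum_orbits[OF g] cyclic_weight_eq_sum_orbits[OF f] orbits
    by (simp add: sum.reindex weight)
  have "card (orbit g (\<sigma> y)) = card (orbit f y)" for y
    by (simp add: orbit card_image inj_on_subset[OF inj])
  then have "(\<forall>z\<in>\<sigma> ` {1..n}. odd (card (orbit g z))) \<longleftrightarrow> (\<forall>y\<in>{1..n}. odd (card (orbit f y)))"
    by simp
  moreover have "permutation g" "permutation f"
    using g f permutation_permutes by blast+
  ultimately show "odd_order n g \<longleftrightarrow> odd_order n f"
    unfolding image by (simp add: odd_order_iff_card_orbit)
qed

lemma transpose_conjugate_invariants:
  assumes n: "n \<ge> 4" and ab: "{a, b} = {2, 3::nat}" and f: "f permutes {1..n}"
    and fn: "f n = a" and fa: "f a \<noteq> b"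
  defines "g \<equiv> transpose a b \<circ> f \<circ> transpose a b"
  shows "g permutes {1..n}" "odd_order n g \<longleftrightarrow> odd_order n f" "cyclic_weight n g = cyclic_weight n f"
proof -
  have \<tau>: "transpose a b = transpose 2 (Suc 2)"
    using ab by (auto simp: doubleton_eq_iff transpose_commute)
  have "b \<noteq> n"
    using n ab by (auto simp: doubleton_eq_iff)
  then have "f b \<noteq> a"
    using fn permutes_inj[OF f] by (metis injD)
  then have "{f y, y} \<noteq> {2, Suc 2}" "{y, f y} \<noteq> {2, Suc 2}" for y
    using fa ab by (auto simp: doubleton_eq_iff)
  then have "transpose a b (f y) < transpose a b y \<longleftrightarrow> f y < y"
    "transpose a b y < transpose a b (f y) \<longleftrightarrow> y < f y" for y
    unfolding \<tau> by (metis transpose_Suc_less_iff)+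
  moreover have "transpose a b permutes {1..n}"
    using n ab by (intro permutes_swap_id) (auto simp: doubleton_eq_iff)
  ultimately show "g permutes {1..n}" "odd_order n g \<longleftrightarrow> odd_order n f"
    and "cyclic_weight n g = cyclic_weight n f"
    using conjugate_invariants[OF f, of "transpose a b"] unfolding g_def inv_transpose_eq
    by simp_all
qed

section \<open>Flipping a cycle\<close>

text \<open>
  On the cycle \<open>(x, f x, f\<^sup>2 x, f\<^sup>3 x, f\<^sup>4 x, \<dots>, f\<^sup>-\<^sup>1 x)\<close> this is the cycle
  \<open>(x, f x, f\<^sup>3 x, f\<^sup>2 x, f\<^sup>-\<^sup>1 x, \<dots>, f\<^sup>4 x)\<close>: the two letters after \<open>f x\<close> are swapped and
  the arc from \<open>f\<^sup>4 x\<close> to \<open>f\<^sup>-\<^sup>1 x\<close> is reversed.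
\<close>
definition cycle_flip :: "('a \<Rightarrow> 'a) \<Rightarrow> 'a \<Rightarrow> 'a \<Rightarrow> 'a" where
  "cycle_flip f x v = (if v \<in> orbit f x
     then inv f (transpose x (f (f x)) (transpose (f x) (f (f (f (f x)))) v)) else f v)"

context
  fixes f :: "'a \<Rightarrow> 'a" and S :: "'a set" and x :: 'a
  assumes f: "f permutes S" and fin: "finite S" and x: "x \<in> S" and long: "5 \<le> card (orbit f x)"
begin

private lemma perm: "permutation f"
  using f fin permutation_permutes by blast

lemma iterates_distinct:
  "distinct [x, f x, f (f x), f (f (f x)), f (f (f (f x)))]"
  "inv f x \<notin> {x, f x, f (f x), f (f (f x))}"
proof -
  have "inj_on (\<lambda>k. (f ^^ k) x) {0..<card (orbit f x)}"
    by (auto simp: inj_on_def funpow_orbit_eq_iff[OF perm])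
  then have "distinct (map (\<lambda>k. (f ^^ k) x) [0..<5])"
    and "(f ^^ (card (orbit f x) - 1)) x \<notin> set (map (\<lambda>k. (f ^^ k) x) [0..<4])"
    using long by (auto simp: distinct_map inj_on_def funpow_orbit_eq_iff[OF perm])
  then show "distinct [x, f x, f (f x), f (f (f x)), f (f (f (f x)))]"
    "inv f x \<notin> {x, f x, f (f x), f (f (f x))}"
    by (simp_all add: inv_eq_funpow_card[OF perm] numeral_eq_Suc upt_rec)
qed

lemma iterates_in_orbit:
  "x \<in> orbit f x" "f x \<in> orbit f x" "f (f x) \<in> orbit f x" "f (f (f x)) \<in> orbit f x"
  "f (f (f (f x))) \<in> orbit f x"
  by (simp_all add: f_mem_orbit_iff[OF perm] permutation_self_in_orbit[OF perm])

lemma cycle_flip_outside: "v \<notin> orbit f x \<Longrightarrow> cycle_flip f x v = f v"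
  by (simp add: cycle_flip_def)

lemma cycle_flip_inv:
  "v \<in> orbit f x \<Longrightarrow> v \<notin> {x, f x, f (f x), f (f (f (f x)))} \<Longrightarrow> cycle_flip f x v = inv f v"
  by (simp add: cycle_flip_def transpose_def)

lemma cycle_flip_simps:
  "cycle_flip f x x = f x" "cycle_flip f x (f x) = f (f (f x))"
  "cycle_flip f x (f (f (f x))) = f (f x)"
  "cycle_flip f x (f (f x)) = inv f x" "cycle_flip f x (f (f (f (f x)))) = x"
  using iterates_distinct(1) iterates_in_orbit
  by (auto simp: cycle_flip_def transpose_def permutes_inverses[OF f])

lemma cycle_flip_permutes: "cycle_flip f x permutes S"
proof -
  let ?\<rho> = "\<lambda>v. transpose x (f (f x)) (transpose (f x) (f (f (f (f x)))) v)"
  let ?\<rho>' = "\<lambda>v. transpose (f x) (f (f (f (f x)))) (transpose x (f (f x)) v)"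
  define h where "h v = (if v \<in> orbit f x then ?\<rho>' (f v) else inv f v)" for v
  have \<rho>_mem: "?\<rho> v \<in> orbit f x \<longleftrightarrow> v \<in> orbit f x" "?\<rho>' v \<in> orbit f x \<longleftrightarrow> v \<in> orbit f x" for v
    using iterates_in_orbit by (auto simp: transpose_def)
  have "cycle_flip f x (h v) = v" "h (cycle_flip f x v) = v" for v
    by (simp_all add: cycle_flip_def h_def \<rho>_mem f_mem_orbit_iff[OF perm] inv_mem_orbit_iff[OF perm]
        permutes_inverses[OF f])
  then have "bij (cycle_flip f x)"
    by (intro o_bij[of h]) (simp_all add: fun_eq_iff)
  moreover have "cycle_flip f x v = v" if "v \<notin> S" for v
    using that permutes_orbit_subset[OF f x] permutes_not_in[OF f] by (auto simp: cycle_flip_def)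
  ultimately show ?thesis
    unfolding permutes_def bij_iff by blast
qed

lemma cycle_flip_mem_orbit: "v \<in> orbit f x \<Longrightarrow> cycle_flip f x v \<in> orbit f x"
  using iterates_in_orbit by (auto simp: cycle_flip_def transpose_def inv_mem_orbit_iff[OF perm])

lemma cycle_flip_funpow:
  assumes "4 \<le> k" "Suc k < card (orbit f x)"
  shows "cycle_flip f x ((f ^^ Suc k) x) = (f ^^ k) x"
proof -
  have "(f ^^ Suc k) x \<noteq> (f ^^ i) x" if "i \<le> 4" for i
    using assms that long by (subst funpow_orbit_eq_iff[OF perm]) auto
  from this[of 0] this[of 1] this[of 2] this[of 4]
  have "(f ^^ Suc k) x \<notin> {x, f x, f (f x), f (f (f (f x)))}"
    by (simp del: funpow.simps add: funpow_Suc_right numeral_eq_Suc)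
  then have "cycle_flip f x ((f ^^ Suc k) x) = inv f ((f ^^ Suc k) x)"
    by (intro cycle_flip_inv funpow_mem_orbit[OF perm])
  then show ?thesis
    by (simp add: permutes_inverses[OF f])
qed

lemma funpow_mem_orbit_cycle_flip:
  assumes "k < card (orbit f x)"
  shows "(f ^^ k) x \<in> orbit (cycle_flip f x) x"
proof -
  let ?g = "cycle_flip f x"
  have "permutation ?g"
    using cycle_flip_permutes fin permutation_permutes by blast
  then have start_0: "x \<in> orbit ?g x"
    by (rule permutation_self_in_orbit)
  have start_1: "f x \<in> orbit ?g x"
    using orbit.base[of ?g x] by (simp add: cycle_flip_simps)
  have start_3: "f (f (f x)) \<in> orbit ?g x"
    using orbit.step[OF start_1] by (simp add: cycle_flip_simps)
  have start_2: "f (f x) \<in> orbit ?g x"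
    using orbit.step[OF start_3] by (simp add: cycle_flip_simps)
  have start_inv: "inv f x \<in> orbit ?g x"
    using orbit.step[OF start_2] by (simp add: cycle_flip_simps)
  \<comment> \<open>From \<open>f\<^sup>-\<^sup>1 x\<close> the flip walks backwards along the cycle of \<open>f\<close> down to \<open>f\<^sup>4 x\<close>.\<close>
  have down: "(f ^^ (card (orbit f x) - 1 - j)) x \<in> orbit ?g x" if "j \<le> card (orbit f x) - 5" for j
    using that
  proof (induction j)
    case 0
    then show ?case using start_inv by (simp add: inv_eq_funpow_card[OF perm])
  next
    case (Suc j)
    define k where "k = card (orbit f x) - 1 - Suc j"
    have k: "4 \<le> k" "Suc k < card (orbit f x)" "Suc k = card (orbit f x) - 1 - j"
      using Suc.prems long by (auto simp: k_def)
    then have "(f ^^ Suc k) x \<in> orbit ?g x"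
      using Suc by simp
    then have "(f ^^ k) x \<in> orbit ?g x"
      using orbit.step[of "(f ^^ Suc k) x" ?g x] cycle_flip_funpow[OF k(1,2)] by simp
    then show ?case
      by (simp add: k_def)
  qed
  show ?thesis
  proof (cases "k < 4")
    case True
    then show ?thesis
      using start_0 start_1 start_2 start_3 by (auto simp: numeral_eq_Suc less_Suc_eq)
  next
    case False
    then show ?thesis
      using assms down[of "card (orbit f x) - 1 - k"] by simp
  qed
qed

lemma orbit_cycle_flip_self: "orbit (cycle_flip f x) x = orbit f x"
proof
  show "orbit (cycle_flip f x) x \<subseteq> orbit f x"
  proof
    fix y assume "y \<in> orbit (cycle_flip f x) x"
    then show "y \<in> orbit f x"
      by induction (simp_all add: cycle_flip_mem_orbit iterates_in_orbit)
  qed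
  have "orbit f x = (\<lambda>k. (f ^^ k) x) ` {0..<card (orbit f x)}"
    using set_support[OF perm, of x] card_orbit_eq_least_power[OF perm, of x] by simp
  then show "orbit f x \<subseteq> orbit (cycle_flip f x) x"
    using funpow_mem_orbit_cycle_flip
    by (metis (no_types, lifting) atLeastLessThan_iff image_subset_iff)
qed

lemma orbit_cycle_flip: "orbit (cycle_flip f x) = orbit f"
proof
  fix y
  have g_perm: "permutation (cycle_flip f x)"
    using cycle_flip_permutes fin permutation_permutes by blast
  show "orbit (cycle_flip f x) y = orbit f y"
  proof (cases "y \<in> orbit f x")
    case True
    then show ?thesis
      using orbit_eq_of_mem[OF g_perm] orbit_eq_of_mem[OF perm] orbit_cycle_flip_self by metis
  next
    case False
    have "cycle_flip f x s = f s" if "s \<in> orbit f y" for s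
      using False that orbit_eq_of_mem[OF perm] permutation_self_in_orbit[OF perm]
      by (metis cycle_flip_outside)
    then show ?thesis
      by (rule orbit_cong[OF permutation_self_in_orbit[OF perm]])
  qed
qed

lemma cycle_flip_cycle_flip: "cycle_flip (cycle_flip f x) x = f"
proof
  fix v
  let ?g = "cycle_flip f x"
  let ?\<rho> = "\<lambda>v. transpose x (f (f (f x))) (transpose (f x) (inv f x) v)"
  have key: "?g (f v) = ?\<rho> v" if "v \<in> orbit f x" for v
  proof -
    consider "v = x" | "v = f x" | "v = f (f (f x))" | "v = inv f x"
      | "v \<notin> {x, f x, f (f (f x)), inv f x}" by blast
    then show ?thesis
    proof cases
      case 5
      then have "f v \<notin> {x, f x, f (f x), f (f (f (f x)))}"
        by (auto simp: permutes_inverses[OF f] dest: arg_cong[where f = "inv f"])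
      then show ?thesis
        using 5 that
        by (simp add: cycle_flip_inv f_mem_orbit_iff[OF perm] permutes_inverses[OF f] transpose_def)
    qed (use iterates_distinct in
        \<open>auto simp: cycle_flip_simps transpose_def permutes_inverses[OF f]\<close>)
  qed
  show "cycle_flip ?g x v = f v"
  proof (cases "v \<in> orbit f x")
    case True
    then have "cycle_flip ?g x v = inv ?g (?\<rho> v)"
      by (simp add: cycle_flip_def[of ?g] orbit_cycle_flip cycle_flip_simps)
    also have "\<dots> = inv ?g (?g (f v))"
      using key[OF True] by simp
    also have "\<dots> = f v"
      by (rule permutes_inverses(2)[OF cycle_flip_permutes])
    finally show ?thesis .
  next
    case False
    then show ?thesis
      by (simp add: cycle_flip_def[of ?g] orbit_cycle_flip cycle_flip_outside)
  qed
qed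

end

lemma cyclic_weight_cycle_flip:
  assumes f: "f permutes {1..n}" and x: "x \<in> {1..n}" and long: "5 \<le> card (orbit f x)"
    and pattern: "\<And>y. y \<in> {x, f x, f (f x), f (f (f (f x)))} \<Longrightarrow>
      (cycle_flip f x y < y \<longleftrightarrow> inv f y < y) \<and> (y < cycle_flip f x y \<longleftrightarrow> y < inv f y)"
  shows "cyclic_weight n (cycle_flip f x) = cyclic_weight n f"
proof -
  let ?g = "cycle_flip f x"
  note flip = f finite_atLeastAtMost x long
  have perm: "permutation f"
    using f permutation_permutes by blast
  have "orbit_weight ?g (orbit f x) = orbit_weight (inv f) (orbit f x)"
  proof (rule orbit_weight_cong)
    fix y assume y: "y \<in> orbit f x"
    show "(?g y < y \<longleftrightarrow> inv f y < y) \<and> (y < ?g y \<longleftrightarrow> y < inv f y)"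
    proof (cases "y \<in> {x, f x, f (f x), f (f (f (f x)))}")
      case True
      then show ?thesis by (rule pattern)
    next
      case False
      then show ?thesis by (simp add: cycle_flip_inv[OF flip y])
    qed
  qed
  also have "\<dots> = orbit_weight f (orbit f x)"
    by (rule orbit_weight_inv[OF permutes_bij[OF f] image_orbit[OF perm]])
  finally have weight_x: "orbit_weight ?g (orbit f x) = orbit_weight f (orbit f x)" .
  have "orbit_weight ?g Q = orbit_weight f Q" if Q: "Q \<in> orbit f ` {1..n}" for Q
  proof (cases "Q = orbit f x")
    case True
    with weight_x show ?thesis by simp
  next
    case False
    obtain y where y: "Q = orbit f y"
      using Q by blast
    have "s \<notin> orbit f x" if "s \<in> Q" for s
      using False orbit_eq_of_mem[OF perm, of s x] orbit_eq_of_mem[OF perm, of s y] y that by auto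
    then have "?g s = f s" if "s \<in> Q" for s
      using cycle_flip_outside[OF flip] that by blast
    then show ?thesis
      by (intro orbit_weight_cong) simp
  qed
  then show ?thesis
    by (simp add: cyclic_weight_eq_sum_orbits[OF cycle_flip_permutes[OF flip]]
        cyclic_weight_eq_sum_orbits[OF f] orbit_cycle_flip[OF flip])
qed

lemma cycle_flip_same_order_as_inv:
  fixes f :: "nat \<Rightarrow> nat"
  assumes n: "n \<ge> 4" and ab: "a = 2 \<and> b = 3 \<or> a = 3 \<and> b = 2" and f: "f permutes {1..n}"
    and long: "5 \<le> card (orbit f 1)" and f1: "f 1 = n" and fn: "f n = a" and fa: "f a = b"
    and y: "y \<in> {1, f 1, f (f 1), f (f (f (f 1)))}"
  shows "(cycle_flip f 1 y < y \<longleftrightarrow> inv f y < y) \<and> (y < cycle_flip f 1 y \<longleftrightarrow> y < inv f y)"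
proof -
  have one: "1 \<in> {1..n}"
    using n by simp
  note flip = f finite_atLeastAtMost one long
  define x0 y0 where "x0 = inv f 1" and "y0 = f b"
  note g_simps = cycle_flip_simps[OF flip, unfolded f1 fn fa, folded x0_def y0_def]
  have x0: "4 \<le> x0" and y0: "4 \<le> y0"
  proof -
    have "b \<in> {1..n}"
      using n ab by auto
    then have "x0 \<in> {1..n}" "y0 \<in> {1..n}"
      unfolding x0_def y0_def
      using one permutes_in_image[OF f] permutes_in_image[OF permutes_inv[OF f]] by blast+
    moreover have "x0 \<notin> {1, n, a, b}" "y0 \<notin> {1, n, a, b}"
      using iterates_distinct[OF flip, unfolded f1 fn fa, folded x0_def y0_def] by auto
    ultimately show "4 \<le> x0" "4 \<le> y0"
      using ab by auto
  qed
  from y consider "y = 1" | "y = n" | "y = a" | "y = y0"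
    unfolding f1 fn fa y0_def by blast
  then show ?thesis
  proof cases
    case 1
    then show ?thesis using g_simps n x0 by (simp add: x0_def)
  next
    case 2
    then show ?thesis using g_simps n ab permutes_inverses(2)[OF f, of 1] f1 by auto
  next
    case 3
    then show ?thesis using g_simps n ab x0 permutes_inverses(2)[OF f, of n] fn by auto
  next
    case 4
    then show ?thesis
      using g_simps ab y0 permutes_inverses(2)[OF f, of b] by (auto simp: y0_def)
  qed
qed

lemma cycle_flip_invariants:
  assumes n: "n \<ge> 4" and ab: "{a, b} = {2, 3::nat}"
    and f: "f permutes {1..n}" and odd: "odd_order n f"
    and f1: "f 1 = n" and fn: "f n = a" and fa: "f a = b"
  defines "g \<equiv> cycle_flip f 1"
  shows "g permutes {1..n}" "odd_order n g" "cyclic_weight n g = cyclic_weight n f"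
    "g 1 = n" "g n = b" "g b = a" "cycle_flip g 1 = f"
proof -
  have perm: "permutation f"
    using f permutation_permutes by blast
  have one: "1 \<in> {1..n}"
    using n by simp
  have ab_cases: "a = 2 \<and> b = 3 \<or> a = 3 \<and> b = 2"
    using ab by (simp add: doubleton_eq_iff)
  have "distinct [1, f 1, f (f 1), f (f (f 1))]"
    using n ab_cases f1 fn fa by auto
  moreover have "odd (card (orbit f 1))"
    using odd one by (simp add: odd_order_iff_card_orbit[OF perm])
  ultimately have long: "5 \<le> card (orbit f 1)"
    by (rule five_le_card_orbit[OF perm])
  note flip = f finite_atLeastAtMost one long
  show g: "g permutes {1..n}"
    unfolding g_def by (rule cycle_flip_permutes[OF flip])
  have "orbit g = orbit f"
    unfolding g_def by (rule orbit_cycle_flip[OF flip])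
  moreover have "permutation g"
    using g permutation_permutes by blast
  ultimately show "odd_order n g"
    using odd perm by (simp add: odd_order_iff_card_orbit)
  show "g 1 = n" "g n = b" "g b = a"
    using cycle_flip_simps(1-3)[OF flip, unfolded f1 fn fa, folded g_def] by simp_all
  show "cycle_flip g 1 = f"
    unfolding g_def by (rule cycle_flip_cycle_flip[OF flip])
  show "cyclic_weight n g = cyclic_weight n f"
    unfolding g_def using cycle_flip_same_order_as_inv[OF n ab_cases f long f1 fn fa]
    by (rule cyclic_weight_cycle_flip[OF f one long])
qed

section \<open>Odd order permutations\<close>

lemma p_count_2_eq_3:
  assumes n: "n \<ge> 4"
  shows "p_count n d 1 2 = p_count n d 1 3"
proof -
  define P where "P j = {f. f permutes {1..n} \<and> odd_order n f \<and> int (cyclic_weight n f) = d \<and>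
    f 1 = n \<and> f n = j}" for j
  have fin: "finite (P j)" for j
    unfolding P_def
    by (rule finite_subset[OF _ finite_permutations[OF finite_atLeastAtMost[of 1 n]]]) auto
  have conj: "transpose a b \<circ> f \<circ> transpose a b \<in> P b - {g. g b = a}"
    if ab: "{a, b} = {2, 3}" and "f \<in> P a - {g. g a = b}" for a b f
  proof -
    have f: "f permutes {1..n}" "odd_order n f" "int (cyclic_weight n f) = d"
      "f 1 = n" "f n = a" "f a \<noteq> b"
      using that(2) by (simp_all add: P_def)
    have "transpose a b 1 = 1" "transpose a b n = n" "transpose a b a = b" "transpose a b b = a"
      using n ab by (auto simp: doubleton_eq_iff)
    moreover have "transpose a b (f a) \<noteq> a"
      using f(6) by (auto simp: transpose_def)
    ultimately show ?thesis
      using transpose_conjugate_invariants[OF n ab f(1,5,6)] f(2-5) by (simp add: P_def)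
  qed
  have flip: "cycle_flip f 1 \<in> P b \<inter> {g. g b = a} \<and> cycle_flip (cycle_flip f 1) 1 = f"
    if ab: "{a, b} = {2, 3}" and "f \<in> P a \<inter> {g. g a = b}" for a b f
  proof -
    have f: "f permutes {1..n}" "odd_order n f" "int (cyclic_weight n f) = d"
      "f 1 = n" "f n = a" "f a = b"
      using that(2) by (simp_all add: P_def)
    show ?thesis
      using cycle_flip_invariants[OF n ab f(1,2,4,5,6)] f(3) by (simp add: P_def)
  qed
  have "card (P 2 - {g. g 2 = 3}) = card (P 3 - {g. g 3 = 2})"
    by (rule card_eq_involution[where h = "\<lambda>f. transpose 2 3 \<circ> f \<circ> transpose 2 3"])
      (use conj[of 2 3] conj[of 3 2] in \<open>auto simp: transpose_commute fun_eq_iff\<close>)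
  moreover have "card (P 2 \<inter> {g. g 2 = 3}) = card (P 3 \<inter> {g. g 3 = 2})"
    by (rule card_eq_involution[where h = "\<lambda>f. cycle_flip f 1"])
      (use flip[of 2 3] flip[of 3 2] in \<open>auto simp: insert_commute\<close>)
  ultimately show ?thesis
    using card_Int_Diff[OF fin, of 2 "{g. g 2 = 3}"] card_Int_Diff[OF fin, of 3 "{g. g 3 = 2}"]
    by (simp add: p_count_def P_def)
qed

theorem proposition4p3:
  fixes n :: nat and d :: int
  assumes "n \<ge> 4"
    and "b_count n d 1 2 + b_count n d 2 1 = 2 * p_count n d 1 2"
  shows "b_count n d 1 3 + b_count n d 3 1 = 2 * p_count n d 1 3"
  using assms b_count_sum_2_eq_3[OF assms(1)] p_count_2_eq_3[OF assms(1)] by simp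

end
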